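(* Let $X_r$ be a Dynkin diagram of finite type, $\ell\ge2$, and $U$ either $\mathbb{C}$ or $\mathbb{C}_\xi$. The assignment $Y^{(a)}_m(u)\mapsto \dfrac{M^{(a)}_m(u)}{T^{(a)}_{m-1}(u)T^{(a)}_{m+1}(u)}$ ($a\in I$, $1\le m\le t_a\ell-1$, $u\in U$), where $T^{(0)}_k(u)=T^{(a)}_0(u)=T^{(a)}_{t_a\ell}(u)=1$, defines a ring homomorphism $\varphi_\ell:\mathcal{Y}_\ell(X_r)\to\mathcal{T}_\ell(X_r)$.
   Context: Rings are commutative with identity. $\mathbb{C}_\xi:=\mathbb{C}/(2\pi\sqrt{-1}/\xi)\mathbb{Z}$, $\xi\in\mathbb{C}\setminus2\pi\sqrt{-1}\mathbb{Q}$. Enumeration of $I=\{1,\dots,r\}$: $A_r$: chain; $B_r$: chain with double bond between $r-1,r$, $\alpha_r$ short; $C_r$: same, $\alpha_r$ long, others short; $D_r$: chain $1-\cdots-(r-2)$, $r-1,r$ joined to $r-2$; $E_6$: chain $1-2-3-5-6$, $4$ joined to $3$; $E_7$: chain $1-\cdots-6$, $7$ joined to $3$; $E_8$: chain $1-\cdots-7$, $8$ joined to $5$; $F_4$: chain $1-2-3-4$, double bond between $2,3$, $\alpha_1,\alpha_2$ long; $G_2$: $\alpha_1$ long. $C$ Cartan matrix; $t_a=2$ for short $a$ in $B_r,C_r,F_4$, $t_2=3$ in $G_2$, else $1$. $M^{(a)}_m(u)$: simply laced $\prod_{b:C_{ab}=-1}T^{(b)}_m(u)$; $B_r$: $T^{(a-1)}_m(u)T^{(a+1)}_m(u)$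 ($a\le r-2$), $M^{(r-1)}_m=T^{(r-2)}_m(u)T^{(r)}_{2m}(u)$, $M^{(r)}_{2m}=T^{(r-1)}_m(u-\frac12)T^{(r-1)}_m(u+\frac12)$, $M^{(r)}_{2m+1}=T^{(r-1)}_m(u)T^{(r-1)}_{m+1}(u)$; $C_r$: $T^{(a-1)}_m(u)T^{(a+1)}_m(u)$ ($a\le r-2$), $M^{(r-1)}_{2m}=T^{(r-2)}_{2m}(u)T^{(r)}_m(u-\frac12)T^{(r)}_m(u+\frac12)$, $M^{(r-1)}_{2m+1}=T^{(r-2)}_{2m+1}(u)T^{(r)}_m(u)T^{(r)}_{m+1}(u)$, $M^{(r)}_m=T^{(r-1)}_{2m}(u)$; $F_4$: $M^{(1)}_m=T^{(2)}_m$, $M^{(2)}_m=T^{(1)}_m(u)T^{(3)}_{2m}(u)$, $M^{(3)}_{2m}=T^{(2)}_m(u-\frac12)T^{(2)}_m(u+\frac12)T^{(4)}_{2m}(u)$, $M^{(3)}_{2m+1}=T^{(2)}_m(u)T^{(2)}_{m+1}(u)T^{(4)}_{2m+1}(u)$, $M^{(4)}_m=T^{(3)}_m(u)$; $G_2$: $M^{(1)}_m=T^{(2)}_{3m}(u)$, $M^{(2)}_{3m}=T^{(1)}_m(u-\frac23)T^{(1)}_m(u)T^{(1)}_m(u+\frac23)$, $M^{(2)}_{3m+1}=T^{(1)}_m(u-\frac13)T^{(1)}_m(u+\frac13)T^{(1)}_{m+1}(u)$, $M^{(2)}_{3m+2}=T^{(1)}_m(u)T^{(1)}_{m+1}(u-\frac13)T^{(1)}_{m+1}(u+\frac13)$.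 $\mathcal{T}_\ell(X_r)$: ring with generators $T^{(a)}_m(u)^{\pm1}$ ($1\le m\le t_a\ell-1$) and relations $T^{(a)}_m(u-\tfrac1{t_a})T^{(a)}_m(u+\tfrac1{t_a})=T^{(a)}_{m-1}(u)T^{(a)}_{m+1}(u)+M^{(a)}_m(u)$ for $a\in I$, $1\le m\le t_a\ell-1$, $u\in U$, where $T^{(0)}_k=T^{(a)}_0=T^{(a)}_{t_a\ell}=1$. $\mathcal{Y}_\ell(X_r)$: ring with generators $Y^{(a)}_m(u)^{\pm1}$, $(1+Y^{(a)}_m(u))^{-1}$ ($a\in I$, $1\le m\le t_a\ell-1$, $u\in U$) and relations, for the same range, $Y^{(a)}_m(u-\tfrac1{t_a})Y^{(a)}_m(u+\tfrac1{t_a})=\dfrac{N^{(a)}_m(u)}{(1+Y^{(a)}_{m-1}(u)^{-1})(1+Y^{(a)}_{m+1}(u)^{-1})}$, where $Y^{(0)}_k=0$, $Y^{(a)}_0(u)^{-1}=Y^{(a)}_{t_a\ell}(u)^{-1}=0$, and: simply laced $N^{(a)}_m=\prod_{b:C_{ab}=-1}(1+Y^{(b)}_m(u))$; $B_r$: $(1+Y^{(a-1)}_m(u))(1+Y^{(a+1)}_m(u))$ ($a\le r-2$), $N^{(r-1)}_m=(1+Y^{(r-2)}_m(u))(1+Y^{(r)}_{2m-1}(u))(1+Y^{(r)}_{2m+1}(u))(1+Y^{(r)}_{2m}(u-\frac12))(1+Y^{(r)}_{2m}(u+\frac12))$, $N^{(r)}_{2m}=1+Y^{(r-1)}_m(u)$,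 $N^{(r)}_{2m+1}=1$; $C_r$: $(1+Y^{(a-1)}_m(u))(1+Y^{(a+1)}_m(u))$ ($a\le r-2$), $N^{(r-1)}_{2m}=(1+Y^{(r-2)}_{2m}(u))(1+Y^{(r)}_m(u))$, $N^{(r-1)}_{2m+1}=1+Y^{(r-2)}_{2m+1}(u)$, $N^{(r)}_m=(1+Y^{(r-1)}_{2m-1}(u))(1+Y^{(r-1)}_{2m+1}(u))(1+Y^{(r-1)}_{2m}(u-\frac12))(1+Y^{(r-1)}_{2m}(u+\frac12))$; $F_4$: $N^{(1)}_m=1+Y^{(2)}_m(u)$, $N^{(2)}_m=(1+Y^{(1)}_m(u))(1+Y^{(3)}_{2m-1}(u))(1+Y^{(3)}_{2m+1}(u))(1+Y^{(3)}_{2m}(u-\frac12))(1+Y^{(3)}_{2m}(u+\frac12))$, $N^{(3)}_{2m}=(1+Y^{(2)}_m(u))(1+Y^{(4)}_{2m}(u))$, $N^{(3)}_{2m+1}=1+Y^{(4)}_{2m+1}(u)$, $N^{(4)}_m=1+Y^{(3)}_m(u)$; $G_2$: $N^{(1)}_m=(1+Y^{(2)}_{3m-2}(u))(1+Y^{(2)}_{3m+2}(u))(1+Y^{(2)}_{3m}(u))\prod_{\epsilon=\pm1}(1+Y^{(2)}_{3m-1}(u+\frac\epsilon3))(1+Y^{(2)}_{3m+1}(u+\frac\epsilon3))(1+Y^{(2)}_{3m}(u+\frac{2\epsilon}3))$, $N^{(2)}_{3m}=1+Y^{(1)}_m(u)$, $N^{(2)}_{3m+1}=N^{(2)}_{3m+2}=1$.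 *)

theory Defs
  imports Complex_Main
begin

datatype dynkin = A nat | B nat | C nat | D nat | E6 | E7 | E8 | F4 | G2

fun rank :: "dynkin \<Rightarrow> nat" where
  "rank (A r) = r" | "rank (B r) = r" | "rank (C r) = r" | "rank (D r) = r"
| "rank E6 = 6" | "rank E7 = 7" | "rank E8 = 8" | "rank F4 = 4" | "rank G2 = 2"

fun finite_type :: "dynkin \<Rightarrow> bool" where
  "finite_type (A r) = (r \<ge> 1)"
| "finite_type (B r) = (r \<ge> 2)"
| "finite_type (C r) = (r \<ge> 2)"
| "finite_type (D r) = (r \<ge> 4)"
| "finite_type _ = True"

definition index_set :: "dynkin \<Rightarrow> nat set" where
  "index_set X = {1..rank X}"

text \<open>Adjacency (C_ab = -1) for the simply laced diagrams, with the paper's enumeration.\<close>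
definition edge :: "nat \<Rightarrow> nat \<Rightarrow> nat \<Rightarrow> nat \<Rightarrow> bool" where
  "edge i j a b = ((a = i \<and> b = j) \<or> (a = j \<and> b = i))"

fun adj :: "dynkin \<Rightarrow> nat \<Rightarrow> nat \<Rightarrow> bool" where
  "adj (A r) a b = (a \<in> {1..r} \<and> b \<in> {1..r} \<and> (a = b + 1 \<or> b = a + 1))"
| "adj (D r) a b = (a \<in> {1..r} \<and> b \<in> {1..r} \<and>
      (((a = b + 1 \<or> b = a + 1) \<and> a \<le> r - 2 \<and> b \<le> r - 2)
       \<or> edge (r - 1) (r - 2) a b \<or> edge r (r - 2) a b))"
| "adj E6 a b = (edge 1 2 a b \<or> edge 2 3 a b \<or> edge 3 5 a b \<or> edge 5 6 a b \<or> edge 4 3 a b)"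
| "adj E7 a b = (a \<in> {1..7} \<and> b \<in> {1..7} \<and>
      (((a = b + 1 \<or> b = a + 1) \<and> a \<le> 6 \<and> b \<le> 6) \<or> edge 7 3 a b))"
| "adj E8 a b = (a \<in> {1..8} \<and> b \<in> {1..8} \<and>
      (((a = b + 1 \<or> b = a + 1) \<and> a \<le> 7 \<and> b \<le> 7) \<or> edge 8 5 a b))"
| "adj _ a b = False"

fun tnum :: "dynkin \<Rightarrow> nat \<Rightarrow> nat" where
  "tnum (B r) a = (if a = r then 2 else 1)"
| "tnum (C r) a = (if a < r then 2 else 1)"
| "tnum F4 a = (if a = 3 \<or> a = 4 then 2 else 1)"
| "tnum G2 a = (if a = 2 then 3 else 1)"
| "tnum _ a = 1"

text \<open>U = C is encoded by period p = 0; U = C_xi = C / (2 pi i / xi) Z is encoded by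
  p = 2 pi i / xi with xi not in 2 pi i Q.  A function on U is a p-periodic function on C.\<close>
definition valid_period :: "complex \<Rightarrow> bool" where
  "valid_period p \<longleftrightarrow> p = 0 \<or>
     (\<exists>\<xi>::complex. \<xi> \<notin> {2 * of_real pi * \<i> * of_rat q | q. True} \<and> p = 2 * of_real pi * \<i> / \<xi>)"

definition uinv :: "'a::comm_ring_1 \<Rightarrow> 'a" where
  "uinv x = (SOME y. x * y = 1)"

definition Tb :: "dynkin \<Rightarrow> nat \<Rightarrow> (nat \<Rightarrow> nat \<Rightarrow> complex \<Rightarrow> 'a::comm_ring_1)
    \<Rightarrow> nat \<Rightarrow> nat \<Rightarrow> complex \<Rightarrow> 'a" where
  "Tb X l T a m u = (if a = 0 \<or> m = 0 \<or> m = tnum X a * l then 1 else T a m u)"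

fun Mfun :: "dynkin \<Rightarrow> (nat \<Rightarrow> nat \<Rightarrow> complex \<Rightarrow> 'a::comm_ring_1)
    \<Rightarrow> nat \<Rightarrow> nat \<Rightarrow> complex \<Rightarrow> 'a" where
  "Mfun (B r) T a m u =
     (if a \<le> r - 2 then T (a - 1) m u * T (a + 1) m u
      else if a = r - 1 then T (r - 2) m u * T r (2 * m) u
      else if even m then T (r - 1) (m div 2) (u - 1/2) * T (r - 1) (m div 2) (u + 1/2)
      else T (r - 1) (m div 2) u * T (r - 1) (m div 2 + 1) u)"
| "Mfun (C r) T a m u =
     (if a \<le> r - 2 then T (a - 1) m u * T (a + 1) m u
      else if a = r - 1 then
        (if even m then T (r - 2) m u * T r (m div 2) (u - 1/2) * T r (m div 2) (u + 1/2)
         else T (r - 2) m u * T r (m div 2) u * T r (m div 2 + 1) u)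
      else T (r - 1) (2 * m) u)"
| "Mfun F4 T a m u =
     (if a = 1 then T 2 m u
      else if a = 2 then T 1 m u * T 3 (2 * m) u
      else if a = 3 then
        (if even m then T 2 (m div 2) (u - 1/2) * T 2 (m div 2) (u + 1/2) * T 4 m u
         else T 2 (m div 2) u * T 2 (m div 2 + 1) u * T 4 m u)
      else T 3 m u)"
| "Mfun G2 T a m u =
     (if a = 1 then T 2 (3 * m) u
      else if m mod 3 = 0 then
        T 1 (m div 3) (u - 2/3) * T 1 (m div 3) u * T 1 (m div 3) (u + 2/3)
      else if m mod 3 = 1 then
        T 1 (m div 3) (u - 1/3) * T 1 (m div 3) (u + 1/3) * T 1 (m div 3 + 1) u
      else T 1 (m div 3) u * T 1 (m div 3 + 1) (u - 1/3) * T 1 (m div 3 + 1) (u + 1/3))"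
| "Mfun X T a m u = (\<Prod>b\<in>{b \<in> index_set X. adj X a b}. T b m u)"

text \<open>T is a family of elements of a commutative ring R indexed by the generators of
  the ring T_l(X_r) (a in I, 1 <= m <= t_a l - 1, u in U) satisfying its defining relations
  (all generators invertible, T-system relations).\<close>
definition T_system :: "dynkin \<Rightarrow> nat \<Rightarrow> complex \<Rightarrow> (nat \<Rightarrow> nat \<Rightarrow> complex \<Rightarrow> 'a::comm_ring_1) \<Rightarrow> bool" where
  "T_system X l p T \<longleftrightarrow>
     (\<forall>a\<in>index_set X. \<forall>m. 1 \<le> m \<and> m \<le> tnum X a * l - 1 \<longrightarrow> (\<forall>u.
        T a m (u + p) = T a m u \<and>
        (T a m u) dvd 1 \<and>
        T a m (u - 1 / of_nat (tnum X a)) * T a m (u + 1 / of_nat (tnum X a)) =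
          Tb X l T a (m - 1) u * Tb X l T a (m + 1) u + Mfun X (Tb X l T) a m u))"

definition Y0 :: "(nat \<Rightarrow> nat \<Rightarrow> complex \<Rightarrow> 'a::comm_ring_1) \<Rightarrow> nat \<Rightarrow> nat \<Rightarrow> complex \<Rightarrow> 'a" where
  "Y0 Y a m u = (if a = 0 then 0 else Y a m u)"

definition Yinvb :: "dynkin \<Rightarrow> nat \<Rightarrow> (nat \<Rightarrow> nat \<Rightarrow> complex \<Rightarrow> 'a::comm_ring_1)
    \<Rightarrow> nat \<Rightarrow> nat \<Rightarrow> complex \<Rightarrow> 'a" where
  "Yinvb X l Y a m u = (if m = 0 \<or> m = tnum X a * l then 0 else uinv (Y a m u))"

fun Nfun :: "dynkin \<Rightarrow> (nat \<Rightarrow> nat \<Rightarrow> complex \<Rightarrow> 'a::comm_ring_1)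
    \<Rightarrow> nat \<Rightarrow> nat \<Rightarrow> complex \<Rightarrow> 'a" where
  "Nfun (B r) Y a m u =
     (if a \<le> r - 2 then (1 + Y (a - 1) m u) * (1 + Y (a + 1) m u)
      else if a = r - 1 then
        (1 + Y (r - 2) m u) * (1 + Y r (2 * m - 1) u) * (1 + Y r (2 * m + 1) u)
        * (1 + Y r (2 * m) (u - 1/2)) * (1 + Y r (2 * m) (u + 1/2))
      else if even m then 1 + Y (r - 1) (m div 2) u
      else 1)"
| "Nfun (C r) Y a m u =
     (if a \<le> r - 2 then (1 + Y (a - 1) m u) * (1 + Y (a + 1) m u)
      else if a = r - 1 then
        (if even m then (1 + Y (r - 2) m u) * (1 + Y r (m div 2) u)
         else 1 + Y (r - 2) m u)
      else (1 + Y (r - 1) (2 * m - 1) u) * (1 + Y (r - 1) (2 * m + 1) u)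
        * (1 + Y (r - 1) (2 * m) (u - 1/2)) * (1 + Y (r - 1) (2 * m) (u + 1/2)))"
| "Nfun F4 Y a m u =
     (if a = 1 then 1 + Y 2 m u
      else if a = 2 then
        (1 + Y 1 m u) * (1 + Y 3 (2 * m - 1) u) * (1 + Y 3 (2 * m + 1) u)
        * (1 + Y 3 (2 * m) (u - 1/2)) * (1 + Y 3 (2 * m) (u + 1/2))
      else if a = 3 then
        (if even m then (1 + Y 2 (m div 2) u) * (1 + Y 4 m u) else 1 + Y 4 m u)
      else 1 + Y 3 m u)"
| "Nfun G2 Y a m u =
     (if a = 1 then
        (1 + Y 2 (3 * m - 2) u) * (1 + Y 2 (3 * m + 2) u) * (1 + Y 2 (3 * m) u)
        * (\<Prod>\<epsilon>\<in>{-1, 1::complex}.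
             (1 + Y 2 (3 * m - 1) (u + \<epsilon> / 3)) * (1 + Y 2 (3 * m + 1) (u + \<epsilon> / 3))
             * (1 + Y 2 (3 * m) (u + 2 * \<epsilon> / 3)))
      else if m mod 3 = 0 then 1 + Y 1 (m div 3) u
      else 1)"
| "Nfun X Y a m u = (\<Prod>b\<in>{b \<in> index_set X. adj X a b}. 1 + Y b m u)"

text \<open>Y is a family of elements of R indexed by the generators of Y_l(X_r) satisfying its
  defining relations: Y and 1+Y invertible (the generators Y^(+-1) and (1+Y)^(-1)),
  and the Y-system relations.\<close>
definition Y_system :: "dynkin \<Rightarrow> nat \<Rightarrow> complex \<Rightarrow> (nat \<Rightarrow> nat \<Rightarrow> complex \<Rightarrow> 'a::comm_ring_1) \<Rightarrow> bool" where
  "Y_system X l p Y \<longleftrightarrow>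
     (\<forall>a\<in>index_set X. \<forall>m. 1 \<le> m \<and> m \<le> tnum X a * l - 1 \<longrightarrow> (\<forall>u.
        Y a m (u + p) = Y a m u \<and>
        (Y a m u) dvd 1 \<and>
        (1 + Y a m u) dvd 1 \<and>
        Y a m (u - 1 / of_nat (tnum X a)) * Y a m (u + 1 / of_nat (tnum X a)) =
          Nfun X (Y0 Y) a m u *
          uinv ((1 + Yinvb X l Y a (m - 1) u) * (1 + Yinvb X l Y a (m + 1) u))))"

definition phiY :: "dynkin \<Rightarrow> nat \<Rightarrow> (nat \<Rightarrow> nat \<Rightarrow> complex \<Rightarrow> 'a::comm_ring_1)
    \<Rightarrow> nat \<Rightarrow> nat \<Rightarrow> complex \<Rightarrow> 'a" where
  "phiY X l T a m u =
     Mfun X (Tb X l T) a m u * uinv (Tb X l T a (m - 1) u) * uinv (Tb X l T a (m + 1) u)"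

end

theory Submission
  imports Defs
begin

(* Write T(a,m), M(a,m), N(a,m) for the boundary-extended T, M, N and c = 1/t_a.
   All T(a,m) are units and M(a,m) is a product of them, so
   phi(Y(a,m)) = M(a,m) / (T(a,m-1) T(a,m+1)) is a unit, and by the T-system relation so is
     1 + phi(Y(a,m))(u) = T(a,m)(u-c) T(a,m)(u+c) / (T(a,m-1)(u) T(a,m+1)(u)).
   Likewise 1 + phi(Y(a,k))(u)^-1 = T(a,k)(u-c) T(a,k)(u+c) / M(a,k)(u); this also holds at the
   boundary k in {0, t_a l}, where M(a,k) = 1 and the left-hand side is 1 by convention.
   Substituting both formulas turns the Y-system relation into
     M(a,m)(u-c) M(a,m)(u+c) = N(a,m)(u) M(a,m-1)(u) M(a,m+1)(u),
   and expanding each factor 1 + phi(Y) of N by the first formula makes this an identity between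
   monomials in the T's, which is checked diagram by diagram. *)

lemma uinv_right_inverse: "(x::'a::comm_ring_1) dvd 1 \<Longrightarrow> x * uinv x = 1"
  unfolding uinv_def by (rule someI_ex) (metis dvdE)

lemma uinv_left_inverse: "(x::'a::comm_ring_1) dvd 1 \<Longrightarrow> uinv x * x = 1"
  by (metis uinv_right_inverse mult.commute)

lemma uinv_eqI: "(x::'a::comm_ring_1) * y = 1 \<Longrightarrow> uinv x = y"
  by (metis dvd_triv_left mult.assoc mult.commute mult_1_left uinv_right_inverse)

lemma eq_mult_uinv_if_mult_eq:
  "(x::'a::comm_ring_1) * y = z \<Longrightarrow> y dvd 1 \<Longrightarrow> x = z * uinv y"
  by (metis mult.assoc mult_1_right uinv_right_inverse)

lemma is_unit_uinv: "(x::'a::comm_ring_1) dvd 1 \<Longrightarrow> uinv x dvd 1"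
  by (metis dvd_triv_right uinv_right_inverse)

lemma is_unit_mult: "(x::'a::comm_ring_1) dvd 1 \<Longrightarrow> y dvd 1 \<Longrightarrow> x * y dvd 1"
  using mult_dvd_mono[of x 1 y 1] by simp

lemma is_unit_prod:
  "(\<And>b. b \<in> S \<Longrightarrow> f b dvd 1) \<Longrightarrow> (prod f S :: 'a::comm_ring_1) dvd 1"
  using prod_dvd_prod[of S f "\<lambda>_. 1"] by simp

lemma mult_right_cancel_if_unit:
  "(c::'a::comm_ring_1) dvd 1 \<Longrightarrow> x * c = y * c \<Longrightarrow> x = y"
  by (metis mult.assoc mult_1_right uinv_right_inverse)

lemma Suc_div_le_if_mod_neq_0:
  fixes m n l :: nat
  assumes "m mod n \<noteq> 0" "m \<le> n * l"
  shows "Suc (m div n) \<le> l"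
proof -
  have "n * (m div n) < n * l"
    using assms mult_div_mod_eq[of n m] by linarith
  then show ?thesis
    by simp
qed

lemma Suc_mult_3_div_mod:
  fixes k :: nat
  shows "Suc (k * 3) div 3 = k" "Suc (k * 3) mod 3 = 1"
    "Suc (Suc (k * 3)) div 3 = k" "Suc (Suc (k * 3)) mod 3 = 2"
  by presburger+

lemma shift_sums:
  fixes u :: complex
  shows "u - 1/2 - 1/2 = u - 1" "u - 1/2 + 1/2 = u" "u + 1/2 - 1/2 = u" "u + 1/2 + 1/2 = u + 1"
    "u - 1/3 - 2/3 = u - 1" "u - 1/3 + 2/3 = u + 1/3" "u + 1/3 - 2/3 = u - 1/3" "u + 1/3 + 2/3 = u + 1"
    "u - 1/3 - 1/3 = u - 2/3" "u - 1/3 + 1/3 = u" "u + 1/3 - 1/3 = u" "u + 1/3 + 1/3 = u + 2/3"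
    "u - 2/3 - 1/3 = u - 1" "u - 2/3 + 1/3 = u - 1/3" "u + 2/3 - 1/3 = u + 1/3" "u + 2/3 + 1/3 = u + 1"
  by (simp_all add: field_simps)

definition simply_laced :: "dynkin \<Rightarrow> bool" where
  "simply_laced X \<longleftrightarrow> (\<exists>r. X = A r \<or> X = D r) \<or> X = E6 \<or> X = E7 \<or> X = E8"

lemma simply_laced_simps:
  assumes "simply_laced X"
  shows "Mfun X F a m u = (\<Prod>b\<in>{b \<in> index_set X. adj X a b}. F b m u)"
    "Nfun X F a m u = (\<Prod>b\<in>{b \<in> index_set X. adj X a b}. 1 + F b m u)"
    "tnum X a = 1"
  using assms unfolding simply_laced_def by auto

lemma finite_type_cases:
  assumes "finite_type X"
  obtains (simply_laced) "simply_laced X" | (B) s where "X = B (s + 2)" | (C) s where "X = C (s + 2)"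
    | (F4) "X = F4" | (G2) "X = G2"
proof (cases X)
  case (B r)
  with assms have "X = B (r - 2 + 2)" by simp
  then show ?thesis using that by blast
next
  case (C r)
  with assms have "X = C (r - 2 + 2)" by simp
  then show ?thesis using that by blast
qed (use that in \<open>auto simp: simply_laced_def\<close>)

(* The facts about Tb below are stated for an arbitrary diagram rather than in the locale: case
   analyses on the diagram substitute it (X := B (s + 2) etc.), after which facts about the locale
   parameter X would no longer apply. *)

lemma T_systemD:
  assumes "T_system X l p T" "a \<in> index_set X" "1 \<le> m" "m \<le> tnum X a * l - 1"
  shows "T a m (u + p) = T a m u" "T a m u dvd 1"
    "T a m (u - 1 / of_nat (tnum X a)) * T a m (u + 1 / of_nat (tnum X a)) =
      Tb X l T a (m - 1) u * Tb X l T a (m + 1) u + Mfun X (Tb X l T) a m u"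
  using assms unfolding T_system_def by blast+

lemma T_system_Tb_unit:
  assumes "T_system X l p T" "b \<le> rank X" "k \<le> tnum X b * l"
  shows "Tb X l T b k v dvd 1"
proof (cases "b = 0 \<or> k = 0 \<or> k = tnum X b * l")
  case False
  then show ?thesis
    using T_systemD(2)[OF assms(1), of b k v] assms(2,3) by (auto simp: Tb_def index_set_def)
qed (auto simp: Tb_def)

lemma T_system_Tb_periodic:
  assumes "T_system X l p T" "b \<le> rank X" "k \<le> tnum X b * l"
  shows "Tb X l T b k (v + p) = Tb X l T b k v"
proof (cases "b = 0 \<or> k = 0 \<or> k = tnum X b * l")
  case False
  then show ?thesis
    using T_systemD(1)[OF assms(1), of b k v] assms(2,3) by (auto simp: Tb_def index_set_def)
qed (auto simp: Tb_def)

lemma T_system_Tb_periodic_shift: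
  assumes "T_system X l p T" "b \<le> rank X" "k \<le> tnum X b * l"
  shows "Tb X l T b k (v + p - c) = Tb X l T b k (v - c)"
    "Tb X l T b k (v + p + c) = Tb X l T b k (v + c)"
  using T_system_Tb_periodic[OF assms, of "v - c"] T_system_Tb_periodic[OF assms, of "v + c"]
  by (simp_all add: algebra_simps)

locale T_solution =
  fixes X :: dynkin and l :: nat and p :: complex
    and T :: "nat \<Rightarrow> nat \<Rightarrow> complex \<Rightarrow> 'r::comm_ring_1"
  assumes finite_type: "finite_type X" and T_system: "T_system X l p T"
begin

abbreviation TT where "TT \<equiv> Tb X l T"
abbreviation Y where "Y \<equiv> phiY X l T"
abbreviation step :: "nat \<Rightarrow> complex" where "step a \<equiv> 1 / of_nat (tnum X a)"
abbreviation generator_index :: "nat \<Rightarrow> nat \<Rightarrow> bool" where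
  "generator_index a m \<equiv> a \<in> index_set X \<and> 1 \<le> m \<and> m \<le> tnum X a * l - 1"

lemmas Tb_unit = T_system_Tb_unit[OF T_system]

lemma Tb_unit_around_generator:
  assumes "generator_index a m"
  shows "TT a (m - 1) v dvd 1" "TT a m v dvd 1" "TT a (m + 1) v dvd 1"
  using assms by (auto simp: index_set_def intro!: Tb_unit)

lemma Tb_relation:
  assumes "generator_index a m"
  shows "TT a m (u - step a) * TT a m (u + step a) =
    TT a (m - 1) u * TT a (m + 1) u + Mfun X TT a m u"
proof -
  from assms have "a \<noteq> 0" "m \<noteq> 0"
    by (auto simp: index_set_def)
  moreover from assms have "m \<noteq> tnum X a * l"
    by linarith
  ultimately show ?thesis
    using T_systemD(3)[OF T_system, of a m u] assms by (simp add: Tb_def)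
qed

lemma Mfun_boundary:
  assumes "a \<in> index_set X"
  shows "Mfun X TT a 0 u = 1" "Mfun X TT a (tnum X a * l) u = 1"
  using finite_type assms
  by (cases rule: finite_type_cases; auto simp: simply_laced_simps index_set_def Tb_def)+

lemma is_unit_Mfun:
  assumes "a \<in> index_set X" "m \<le> tnum X a * l"
  shows "Mfun X TT a m u dvd 1"
  using finite_type T_system assms
  by (cases rule: finite_type_cases)
    (auto simp: simply_laced_simps index_set_def Suc_div_le_if_mod_neq_0 odd_iff_mod_2_eq_one
      intro!: is_unit_mult is_unit_prod T_system_Tb_unit)

lemma Mfun_periodic:
  assumes "a \<in> index_set X" "m \<le> tnum X a * l"
  shows "Mfun X TT a m (u + p) = Mfun X TT a m u"
  using finite_type T_system assms
  by (cases rule: finite_type_cases)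
    (auto simp: simply_laced_simps index_set_def Suc_div_le_if_mod_neq_0 odd_iff_mod_2_eq_one
      T_system_Tb_periodic T_system_Tb_periodic_shift less_imp_diff_less intro!: prod.cong)

lemma phiY_mult_denominator:
  assumes "generator_index a m"
  shows "Y a m u * (TT a (m - 1) u * TT a (m + 1) u) = Mfun X TT a m u"
proof -
  have "Y a m u * (TT a (m - 1) u * TT a (m + 1) u) =
      Mfun X TT a m u * (TT a (m - 1) u * uinv (TT a (m - 1) u))
        * (TT a (m + 1) u * uinv (TT a (m + 1) u))"
    unfolding phiY_def by (simp add: ac_simps)
  then show ?thesis
    using Tb_unit_around_generator[OF assms] by (simp add: uinv_right_inverse)
qed

lemma one_plus_phiY_mult_denominator:
  assumes "generator_index a m"
  shows "(1 + Y a m u) * (TT a (m - 1) u * TT a (m + 1) u) =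
    TT a m (u - step a) * TT a m (u + step a)"
  using phiY_mult_denominator[OF assms] Tb_relation[OF assms] by (simp add: algebra_simps)

lemma one_plus_Y0_phiY_mult_denominator:
  assumes "b = 0 \<or> generator_index b k"
  shows "(1 + Y0 Y b k v) * (TT b (k - 1) v * TT b (k + 1) v) =
    TT b k (v - step b) * TT b k (v + step b)"
  using assms one_plus_phiY_mult_denominator[of b k v] by (auto simp: Y0_def Tb_def)

lemma is_unit_phiY:
  assumes "generator_index a m"
  shows "Y a m u dvd 1"
  using assms Tb_unit_around_generator[OF assms] unfolding phiY_def
  by (intro is_unit_mult is_unit_uinv is_unit_Mfun) auto

lemma is_unit_one_plus_phiY:
  assumes "generator_index a m"
  shows "1 + Y a m u dvd 1"
proof -
  have "(1 + Y a m u) * (TT a (m - 1) u * TT a (m + 1) u) dvd 1"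
    unfolding one_plus_phiY_mult_denominator[OF assms]
    by (intro is_unit_mult Tb_unit_around_generator(2)[OF assms])
  then show ?thesis
    using dvd_mult_left by blast
qed

lemma phiY_periodic:
  assumes "generator_index a m"
  shows "Y a m (u + p) = Y a m u"
proof -
  from assms have "a \<le> rank X"
    and "m - 1 \<le> tnum X a * l" "m \<le> tnum X a * l" "m + 1 \<le> tnum X a * l"
    by (auto simp: index_set_def)
  then show ?thesis
    using assms Mfun_periodic T_system_Tb_periodic[OF T_system] unfolding phiY_def by simp
qed

lemma prod_list_Tb_shifts:
  assumes "\<forall>(b, k, v) \<in> set L. b = 0 \<or> generator_index b k"
  shows "(\<Prod>(b, k, v) \<leftarrow> L. TT b k (v - step b) * TT b k (v + step b)) =
    (\<Prod>(b, k, v) \<leftarrow> L. 1 + Y0 Y b k v)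
      * (\<Prod>(b, k, v) \<leftarrow> L. TT b (k - 1) v * TT b (k + 1) v)"
  using assms
proof (induction L)
  case (Cons x L)
  obtain b k v where x: "x = (b, k, v)"
    by (cases x)
  with Cons.prems have "b = 0 \<or> generator_index b k"
    by simp
  then show ?case
    using Cons x one_plus_Y0_phiY_mult_denominator[of b k v, symmetric] by (simp add: ac_simps)
qed simp

(* L lists the arguments (b, k, v) of the factors 1 + Y_b,k(v) of N, with b = 0 standing for the
   convention Y_0,k = 0; R and R' are the T-monomials completing both sides to products over L. *)
lemma shift_identityI:
  assumes "\<forall>(b, k, v) \<in> set L. b = 0 \<or> generator_index b k"
    and "N = (\<Prod>(b, k, v) \<leftarrow> L. 1 + Y0 Y b k v)"
    and "R dvd 1"
    and "lhs * R =
      (\<Prod>(b, k, v) \<leftarrow> L. TT b k (v - step b) * TT b k (v + step b)) * R'"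
    and "rhs * R = (\<Prod>(b, k, v) \<leftarrow> L. TT b (k - 1) v * TT b (k + 1) v) * R'"
  shows "lhs = N * rhs"
proof (rule mult_right_cancel_if_unit[OF assms(3)])
  show "lhs * R = N * rhs * R"
    using assms(2,4,5) prod_list_Tb_shifts[OF assms(1)] by (simp add: mult.assoc)
qed

lemma Mfun_shift_identity_simply_laced:
  assumes "simply_laced X" "generator_index a m"
  shows "Mfun X TT a m (u - step a) * Mfun X TT a m (u + step a) =
    Nfun X (Y0 Y) a m u * (Mfun X TT a (m - 1) u * Mfun X TT a (m + 1) u)"
proof -
  let ?S = "{b \<in> index_set X. adj X a b}"
  have "Mfun X TT a m (u - step a) * Mfun X TT a m (u + step a) =
      (\<Prod>b\<in>?S. TT b m (u - step b) * TT b m (u + step b))"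
    using assms(1) by (simp add: simply_laced_simps prod.distrib)
  also have "\<dots> = (\<Prod>b\<in>?S. (1 + Y0 Y b m u) * (TT b (m - 1) u * TT b (m + 1) u))"
    using assms by (intro prod.cong refl one_plus_Y0_phiY_mult_denominator[symmetric])
      (auto simp: simply_laced_simps)
  also have "\<dots> = Nfun X (Y0 Y) a m u * (Mfun X TT a (m - 1) u * Mfun X TT a (m + 1) u)"
    using assms(1) by (simp add: simply_laced_simps prod.distrib)
  finally show ?thesis .
qed

lemma Mfun_shift_identity_B:
  assumes type_B: "X = B (s + 2)" and am: "generator_index a m"
  shows "Mfun X TT a m (u - step a) * Mfun X TT a m (u + step a) =
    Nfun X (Y0 Y) a m u * (Mfun X TT a (m - 1) u * Mfun X TT a (m + 1) u)"
proof -
  from am type_B have a_range: "1 \<le> a" "a \<le> s + 2"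
    and m_range: "1 \<le> m" "m \<le> tnum X a * l - 1"
    by (auto simp: index_set_def)
  then obtain i where i: "m = Suc i"
    by (cases m) auto
  consider "a \<le> s" | "a = s + 1"
    | j where "a = s + 2" "m = 2 * j + 2" | j where "a = s + 2" "m = 2 * j + 1"
  proof -
    have "a \<le> s \<or> a = s + 1 \<or> a = s + 2"
      using a_range by linarith
    moreover have "(\<exists>j. m = 2 * j + 2) \<or> (\<exists>j. m = 2 * j + 1)"
      using m_range(1) by presburger
    ultimately show ?thesis
      using that by blast
  qed
  then show ?thesis
  proof cases
    case 1
    show ?thesis
      by (rule shift_identityI[where L = "[(a - 1, m, u), (a + 1, m, u)]" and R = 1 and R' = 1])
        (use T_system type_B a_range m_range 1 in
          \<open>auto simp: index_set_def shift_sums ac_simps intro!: is_unit_mult T_system_Tb_unit\<close>)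
  next
    case 2
    show ?thesis
      by (rule shift_identityI[where L = "[(s, m, u), (s + 2, 2 * m - 1, u), (s + 2, 2 * m + 1, u),
          (s + 2, 2 * m, u - 1/2), (s + 2, 2 * m, u + 1/2)]"
        and R = "TT (s + 2) (2 * m - 1) (u - 1/2) * TT (s + 2) (2 * m - 1) (u + 1/2)
          * TT (s + 2) (2 * m + 1) (u - 1/2) * TT (s + 2) (2 * m + 1) (u + 1/2)
          * TT (s + 2) (2 * m) u * TT (s + 2) (2 * m) u"
        and R' = 1])
        (use T_system type_B m_range i 2 in
          \<open>auto simp: index_set_def shift_sums ac_simps intro!: is_unit_mult T_system_Tb_unit\<close>)
  next
    case (3 j)
    show ?thesis
      by (rule shift_identityI[where L = "[(s + 1, j + 1, u)]" and R = 1
          and R' = "TT (s + 1) (j + 1) u * TT (s + 1) (j + 1) u"])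
        (use T_system type_B m_range 3 in
          \<open>auto simp: index_set_def shift_sums ac_simps intro!: is_unit_mult T_system_Tb_unit\<close>)
  next
    case (4 j)
    show ?thesis
      by (rule shift_identityI[where L = "[]" and R = 1
          and R' = "TT (s + 1) j (u - 1/2) * TT (s + 1) j (u + 1/2)
            * TT (s + 1) (j + 1) (u - 1/2) * TT (s + 1) (j + 1) (u + 1/2)"])
        (use T_system type_B m_range 4 in
          \<open>auto simp: index_set_def shift_sums ac_simps intro!: is_unit_mult T_system_Tb_unit\<close>)
  qed
qed

lemma Mfun_shift_identity_C:
  assumes type_C: "X = C (s + 2)" and am: "generator_index a m"
  shows "Mfun X TT a m (u - step a) * Mfun X TT a m (u + step a) =
    Nfun X (Y0 Y) a m u * (Mfun X TT a (m - 1) u * Mfun X TT a (m + 1) u)"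
proof -
  from am type_C have a_range: "1 \<le> a" "a \<le> s + 2"
    and m_range: "1 \<le> m" "m \<le> tnum X a * l - 1"
    by (auto simp: index_set_def)
  then obtain i where i: "m = Suc i"
    by (cases m) auto
  consider "a \<le> s" | j where "a = s + 1" "m = 2 * j + 2" | j where "a = s + 1" "m = 2 * j + 1"
    | "a = s + 2"
  proof -
    have "a \<le> s \<or> a = s + 1 \<or> a = s + 2"
      using a_range by linarith
    moreover have "(\<exists>j. m = 2 * j + 2) \<or> (\<exists>j. m = 2 * j + 1)"
      using m_range(1) by presburger
    ultimately show ?thesis
      using that by blast
  qed
  then show ?thesis
  proof cases
    case 1
    show ?thesis
      by (rule shift_identityI[where L = "[(a - 1, m, u), (a + 1, m, u)]" and R = 1 and R' = 1])
        (use T_system type_C a_range m_range 1 in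
          \<open>auto simp: index_set_def shift_sums ac_simps intro!: is_unit_mult T_system_Tb_unit\<close>)
  next
    case (2 j)
    show ?thesis
      by (rule shift_identityI[where L = "[(s, m, u), (s + 2, j + 1, u)]" and R = 1
          and R' = "TT (s + 2) (j + 1) u * TT (s + 2) (j + 1) u"])
        (use T_system type_C m_range 2 in
          \<open>auto simp: index_set_def shift_sums ac_simps intro!: is_unit_mult T_system_Tb_unit\<close>)
  next
    case (3 j)
    show ?thesis
      by (rule shift_identityI[where L = "[(s, m, u)]" and R = 1
          and R' = "TT (s + 2) j (u - 1/2) * TT (s + 2) j (u + 1/2)
            * TT (s + 2) (j + 1) (u - 1/2) * TT (s + 2) (j + 1) (u + 1/2)"])
        (use T_system type_C m_range 3 in
          \<open>auto simp: index_set_def shift_sums ac_simps intro!: is_unit_mult T_system_Tb_unit\<close>)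
  next
    case 4
    show ?thesis
      by (rule shift_identityI[where L = "[(s + 1, 2 * m - 1, u), (s + 1, 2 * m + 1, u),
          (s + 1, 2 * m, u - 1/2), (s + 1, 2 * m, u + 1/2)]"
        and R = "TT (s + 1) (2 * m - 1) (u - 1/2) * TT (s + 1) (2 * m - 1) (u + 1/2)
          * TT (s + 1) (2 * m + 1) (u - 1/2) * TT (s + 1) (2 * m + 1) (u + 1/2)
          * TT (s + 1) (2 * m) u * TT (s + 1) (2 * m) u"
        and R' = 1])
        (use T_system type_C m_range i 4 in
          \<open>auto simp: index_set_def shift_sums ac_simps intro!: is_unit_mult T_system_Tb_unit\<close>)
  qed
qed

lemma Mfun_shift_identity_F4:
  assumes type_F4: "X = F4" and am: "generator_index a m"
  shows "Mfun X TT a m (u - step a) * Mfun X TT a m (u + step a) =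
    Nfun X (Y0 Y) a m u * (Mfun X TT a (m - 1) u * Mfun X TT a (m + 1) u)"
proof -
  from am type_F4 have a_range: "1 \<le> a" "a \<le> 4"
    and m_range: "1 \<le> m" "m \<le> tnum X a * l - 1"
    by (auto simp: index_set_def)
  then obtain i where i: "m = Suc i"
    by (cases m) auto
  consider "a = 1" | "a = 2" | j where "a = 3" "m = 2 * j + 2" | j where "a = 3" "m = 2 * j + 1"
    | "a = 4"
  proof -
    have "a = 1 \<or> a = 2 \<or> a = 3 \<or> a = 4"
      using a_range by linarith
    moreover have "(\<exists>j. m = 2 * j + 2) \<or> (\<exists>j. m = 2 * j + 1)"
      using m_range(1) by presburger
    ultimately show ?thesis
      using that by blast
  qed
  then show ?thesis
  proof cases
    case 1
    show ?thesis
      by (rule shift_identityI[where L = "[(2, m, u)]" and R = 1 and R' = 1])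
        (use T_system type_F4 m_range 1 in
          \<open>auto simp: index_set_def shift_sums ac_simps intro!: is_unit_mult T_system_Tb_unit\<close>)
  next
    case 2
    show ?thesis
      by (rule shift_identityI[where L = "[(1, m, u), (3, 2 * m - 1, u), (3, 2 * m + 1, u),
          (3, 2 * m, u - 1/2), (3, 2 * m, u + 1/2)]"
        and R = "TT 3 (2 * m - 1) (u - 1/2) * TT 3 (2 * m - 1) (u + 1/2)
          * TT 3 (2 * m + 1) (u - 1/2) * TT 3 (2 * m + 1) (u + 1/2) * TT 3 (2 * m) u * TT 3 (2 * m) u"
        and R' = 1])
        (use T_system type_F4 m_range i 2 in
          \<open>auto simp: index_set_def shift_sums ac_simps intro!: is_unit_mult T_system_Tb_unit\<close>)
  next
    case (3 j)
    show ?thesis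
      by (rule shift_identityI[where L = "[(2, j + 1, u), (4, m, u)]" and R = 1
          and R' = "TT 2 (j + 1) u * TT 2 (j + 1) u"])
        (use T_system type_F4 m_range 3 in
          \<open>auto simp: index_set_def shift_sums ac_simps intro!: is_unit_mult T_system_Tb_unit\<close>)
  next
    case (4 j)
    show ?thesis
      by (rule shift_identityI[where L = "[(4, m, u)]" and R = 1
          and R' = "TT 2 j (u - 1/2) * TT 2 j (u + 1/2)
            * TT 2 (j + 1) (u - 1/2) * TT 2 (j + 1) (u + 1/2)"])
        (use T_system type_F4 m_range 4 in
          \<open>auto simp: index_set_def shift_sums ac_simps intro!: is_unit_mult T_system_Tb_unit\<close>)
  next
    case 5
    show ?thesis
      by (rule shift_identityI[where L = "[(3, m, u)]" and R = 1 and R' = 1])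
        (use T_system type_F4 m_range 5 in
          \<open>auto simp: index_set_def shift_sums ac_simps intro!: is_unit_mult T_system_Tb_unit\<close>)
  qed
qed

lemma Mfun_shift_identity_G2:
  assumes type_G2: "X = G2" and am: "generator_index a m"
  shows "Mfun X TT a m (u - step a) * Mfun X TT a m (u + step a) =
    Nfun X (Y0 Y) a m u * (Mfun X TT a (m - 1) u * Mfun X TT a (m + 1) u)"
proof -
  from am type_G2 have a_range: "1 \<le> a" "a \<le> 2"
    and m_range: "1 \<le> m" "m \<le> tnum X a * l - 1"
    by (auto simp: index_set_def)
  then obtain i where i: "m = Suc i"
    by (cases m) auto
  consider "a = 1" | k where "a = 2" "m = 3 * k + 3" | k where "a = 2" "m = 3 * k + 1"
    | k where "a = 2" "m = 3 * k + 2"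
  proof -
    have "a = 1 \<or> a = 2"
      using a_range by linarith
    moreover have "(\<exists>k. m = 3 * k + 3) \<or> (\<exists>k. m = 3 * k + 1) \<or> (\<exists>k. m = 3 * k + 2)"
      using m_range(1) by presburger
    ultimately show ?thesis
      using that by blast
  qed
  then show ?thesis
  proof cases
    case 1
    show ?thesis
      by (rule shift_identityI[where L = "[(2, 3 * m - 2, u), (2, 3 * m + 2, u), (2, 3 * m, u),
          (2, 3 * m - 1, u - 1/3), (2, 3 * m - 1, u + 1/3),
          (2, 3 * m + 1, u - 1/3), (2, 3 * m + 1, u + 1/3),
          (2, 3 * m, u - 2/3), (2, 3 * m, u + 2/3)]"
        and R = "TT 2 (3 * m - 2) (u - 1/3) * TT 2 (3 * m - 2) (u + 1/3) * TT 2 (3 * m + 2) (u - 1/3)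
          * TT 2 (3 * m + 2) (u + 1/3) * TT 2 (3 * m) (u - 1/3) * TT 2 (3 * m) (u + 1/3)
          * TT 2 (3 * m) (u - 1/3) * TT 2 (3 * m) (u + 1/3) * TT 2 (3 * m - 1) (u - 2/3)
          * TT 2 (3 * m - 1) (u + 2/3) * TT 2 (3 * m + 1) (u - 2/3) * TT 2 (3 * m + 1) (u + 2/3)
          * TT 2 (3 * m - 1) u * TT 2 (3 * m - 1) u * TT 2 (3 * m + 1) u * TT 2 (3 * m + 1) u"
        and R' = 1])
        (use T_system type_G2 m_range i 1 in
          \<open>auto simp: index_set_def shift_sums ac_simps Suc3_eq_add_3
            intro!: is_unit_mult T_system_Tb_unit\<close>)
  next
    case (2 k)
    show ?thesis
      by (rule shift_identityI[where L = "[(1, k + 1, u)]" and R = 1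
          and R' = "TT 1 (k + 1) (u - 1/3) * TT 1 (k + 1) (u + 1/3)
            * TT 1 (k + 1) (u - 1/3) * TT 1 (k + 1) (u + 1/3)"])
        (use T_system type_G2 m_range 2 in
          \<open>auto simp: index_set_def shift_sums ac_simps Suc_mult_3_div_mod
            intro!: is_unit_mult T_system_Tb_unit\<close>)
  next
    case (3 k)
    show ?thesis
      by (rule shift_identityI[where L = "[]" and R = 1
          and R' = "TT 1 k (u - 2/3) * TT 1 k u * TT 1 (k + 1) (u - 1/3)
            * TT 1 k u * TT 1 k (u + 2/3) * TT 1 (k + 1) (u + 1/3)"])
        (use T_system type_G2 m_range 3 in
          \<open>auto simp: index_set_def shift_sums ac_simps Suc_mult_3_div_mod
            intro!: is_unit_mult T_system_Tb_unit\<close>)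
  next
    case (4 k)
    show ?thesis
      by (rule shift_identityI[where L = "[]" and R = 1
          and R' = "TT 1 k (u - 1/3) * TT 1 (k + 1) (u - 2/3) * TT 1 (k + 1) u
            * TT 1 k (u + 1/3) * TT 1 (k + 1) u * TT 1 (k + 1) (u + 2/3)"])
        (use T_system type_G2 m_range 4 in
          \<open>auto simp: index_set_def shift_sums ac_simps Suc_mult_3_div_mod
            intro!: is_unit_mult T_system_Tb_unit\<close>)
  qed
qed

lemma Mfun_shift_identity:
  assumes "generator_index a m"
  shows "Mfun X TT a m (u - step a) * Mfun X TT a m (u + step a) =
    Nfun X (Y0 Y) a m u * (Mfun X TT a (m - 1) u * Mfun X TT a (m + 1) u)"
  using finite_type
proof (cases rule: finite_type_cases)
  case simply_laced
  then show ?thesis using assms by (rule Mfun_shift_identity_simply_laced)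
next
  case (B s)
  then show ?thesis using assms by (rule Mfun_shift_identity_B)
next
  case (C s)
  then show ?thesis using assms by (rule Mfun_shift_identity_C)
next
  case F4
  then show ?thesis using assms by (rule Mfun_shift_identity_F4)
next
  case G2
  then show ?thesis using assms by (rule Mfun_shift_identity_G2)
qed

lemma one_plus_inverse_phiY_mult_Mfun:
  assumes "a \<in> index_set X" "k \<le> tnum X a * l"
  shows "(1 + Yinvb X l Y a k u) * Mfun X TT a k u = TT a k (u - step a) * TT a k (u + step a)"
proof (cases "k = 0 \<or> k = tnum X a * l")
  case True
  then show ?thesis
    using Mfun_boundary[OF assms(1)] by (auto simp: Yinvb_def Tb_def)
next
  case False
  with assms(2) have "1 \<le> k" "k \<le> tnum X a * l - 1"
    by linarith+
  with assms(1) have gen: "generator_index a k"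
    by blast
  let ?M = "Mfun X TT a k u" and ?D = "TT a (k - 1) u * TT a (k + 1) u"
  have M_unit: "?M dvd 1"
    using assms by (rule is_unit_Mfun)
  have "uinv (Y a k u) = ?D * uinv ?M"
  proof (rule uinv_eqI)
    have "Y a k u * (?D * uinv ?M) = (Y a k u * ?D) * uinv ?M"
      by (simp only: mult.assoc)
    also have "\<dots> = 1"
      using phiY_mult_denominator[OF gen] uinv_right_inverse[OF M_unit] by simp
    finally show "Y a k u * (?D * uinv ?M) = 1" .
  qed
  with False have "Yinvb X l Y a k u = ?D * uinv ?M"
    by (simp add: Yinvb_def)
  then have "(1 + Yinvb X l Y a k u) * ?M = ?M + ?D * (uinv ?M * ?M)"
    by (simp only: distrib_right mult_1_left mult.assoc)
  also have "\<dots> = ?D + ?M"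
    using uinv_left_inverse[OF M_unit] by (simp add: add.commute)
  also have "\<dots> = TT a k (u - step a) * TT a k (u + step a)"
    by (rule Tb_relation[OF gen, symmetric])
  finally show ?thesis .
qed

lemma phiY_Y_system_relation:
  assumes gen: "generator_index a m"
  shows "Y a m (u - step a) * Y a m (u + step a) =
    Nfun X (Y0 Y) a m u * uinv ((1 + Yinvb X l Y a (m - 1) u) * (1 + Yinvb X l Y a (m + 1) u))"
proof -
  let ?c = "step a"
  let ?P1 = "1 + Yinvb X l Y a (m - 1) u" and ?P2 = "1 + Yinvb X l Y a (m + 1) u"
  let ?M1 = "Mfun X TT a (m - 1) u" and ?M2 = "Mfun X TT a (m + 1) u"
  from gen have a: "a \<in> index_set X" "a \<le> rank X"
    and bounds: "m - 1 \<le> tnum X a * l" "m + 1 \<le> tnum X a * l"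
    by (auto simp: index_set_def)
  note P1 = one_plus_inverse_phiY_mult_Mfun[OF a(1) bounds(1), of u]
  note P2 = one_plus_inverse_phiY_mult_Mfun[OF a(1) bounds(2), of u]
  have M_unit: "?M1 * ?M2 dvd 1"
    using a bounds by (intro is_unit_mult is_unit_Mfun)
  have P_unit: "?P1 * ?P2 dvd 1"
  proof -
    have "(?P1 * ?P2) * (?M1 * ?M2) = (?P1 * ?M1) * (?P2 * ?M2)"
      by (simp only: ac_simps)
    also have "\<dots> dvd 1"
      unfolding P1 P2 using a bounds by (intro is_unit_mult Tb_unit)
    finally show ?thesis
      by (rule dvd_mult_left)
  qed
  have "Y a m (u - ?c) * Y a m (u + ?c) * (?P1 * ?P2) * (?M1 * ?M2) =
      Y a m (u - ?c) * Y a m (u + ?c) * ((?P1 * ?M1) * (?P2 * ?M2))"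
    by (simp only: ac_simps)
  also have "\<dots> = (Y a m (u - ?c) * (TT a (m - 1) (u - ?c) * TT a (m + 1) (u - ?c)))
      * (Y a m (u + ?c) * (TT a (m - 1) (u + ?c) * TT a (m + 1) (u + ?c)))"
    unfolding P1 P2 by (simp only: ac_simps)
  also have "\<dots> = Mfun X TT a m (u - ?c) * Mfun X TT a m (u + ?c)"
    by (simp only: phiY_mult_denominator[OF gen])
  also have "\<dots> = Nfun X (Y0 Y) a m u * (?M1 * ?M2)"
    by (rule Mfun_shift_identity[OF gen])
  finally have "Y a m (u - ?c) * Y a m (u + ?c) * (?P1 * ?P2) = Nfun X (Y0 Y) a m u"
    by (rule mult_right_cancel_if_unit[OF M_unit])
  then show ?thesis
    using P_unit by (rule eq_mult_uinv_if_mult_eq)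
qed

theorem phiY_Y_system: "Y_system X l p Y"
  unfolding Y_system_def
  by (intro ballI allI impI conjI
        phiY_periodic is_unit_phiY is_unit_one_plus_phiY phiY_Y_system_relation;
      simp)

end

theorem proposition3p8:
  fixes X :: dynkin and l :: nat and p :: complex
    and T :: "nat \<Rightarrow> nat \<Rightarrow> complex \<Rightarrow> 'r::comm_ring_1"
  assumes "finite_type X" and "l \<ge> 2" and "valid_period p"
    and "T_system X l p T"
  shows "Y_system X l p (phiY X l T)"
proof -
  interpret T_solution X l p T
    using assms(1,4) by unfold_locales
  show ?thesis
    by (rule phiY_Y_system)
qed

end
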